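(* Let $T>0$, let $h:(0,\infty)\to(0,\infty)$ be bounded with $\lim_{u\to0^+}h(u)=\lim_{u\to+\infty}h(u)=0$, and let $A\in C^1([0,T]\times(0,1)^n;\mathbb S(n))$ satisfy $|A_{ij}(s,\mu)|\le(\mu^i+\mu^j)h(\mu^j/\mu^i)$ for all $(i,j)\in\mathbb E$ and $(s,\mu)\in[0,T]\times(0,1)^n$. There exist constants $K>1$ and $c_0>0$, depending only on $n$, $\omega_{\min}$, $\omega_{\max}$ and $h$, such that the following holds. Let $\epsilon>0$, $\mu\in\mathcal P_\epsilon(\mathbb G)$, $0<t_0<t_1\le T$, and let $\rho\in C^1([0,t_1];(0,1)^n)$ be a classical solution of $\dot\rho(s)=\nabla_{\mathbb G}\cdot A(s,\rho(s))+\Delta_{\mathbb G}\rho(s)$, $\rho(0)=\mu$. If $\delta\in(0,\epsilon/K)$ and $t_0$, $t_1$ are, respectively, the first times such that $\min_i\rho_i(t_0)=\delta$ and $\min_i\rho_i(t_1)=\delta/(2K)$, then $t_1-t_0\ge c_0$.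
   Context: $\mathbb G=(\mathbb V,\mathbb E,\omega)$: finite, connected, simple undirected graph, $\mathbb V=\{1,\dots,n\}$, edges ordered pairs with $(i,j)\in\mathbb E\iff(j,i)\in\mathbb E$, symmetric weights $\omega_{ij}>0$ iff $(i,j)\in\mathbb E$; $\omega_{\min},\omega_{\max}$ the min/max edge weights. $\mathbb S(n)$: skew-symmetric $n\times n$ matrices. $(\nabla_{\mathbb G}\cdot m)^i=\sum_{j\ne i}\sqrt{\omega_{ij}}m^{ji}$; $(\Delta_{\mathbb G}u)^i=\sum_j\omega_{ij}(u^j-u^i)$. $\mathcal P_\epsilon(\mathbb G)$: probability vectors in $\mathbb R^n$ with all entries $>\epsilon$. *)

theory Defs
  imports "HOL-Analysis.Analysis"
begin

text \<open>Vertices of the graph are the elements of a finite type 'n (n = CARD('n)).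
  Weights: w i j > 0 iff (i,j) is an edge, w i j = 0 otherwise.\<close>

definition weighted_graph :: "('n::finite \<Rightarrow> 'n \<Rightarrow> real) \<Rightarrow> bool" where
  "weighted_graph w \<longleftrightarrow>
     (\<forall>i j. w i j = w j i) \<and> (\<forall>i j. 0 \<le> w i j) \<and> (\<forall>i. w i i = 0) \<and>
     (\<forall>i j. (i, j) \<in> {(a, b). 0 < w a b}\<^sup>*)"

definition min_max_weights :: "('n::finite \<Rightarrow> 'n \<Rightarrow> real) \<Rightarrow> real \<Rightarrow> real \<Rightarrow> bool" where
  "min_max_weights w wmin wmax \<longleftrightarrow>
     (\<forall>i j. 0 < w i j \<longrightarrow> wmin \<le> w i j \<and> w i j \<le> wmax) \<and>
     (\<exists>i j. 0 < w i j \<and> w i j = wmin) \<and> (\<exists>i j. 0 < w i j \<and> w i j = wmax)"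

definition graph_div :: "('n::finite \<Rightarrow> 'n \<Rightarrow> real) \<Rightarrow> real^'n^'n \<Rightarrow> real^'n" where
  "graph_div w m = (\<chi> i. \<Sum>j\<in>UNIV - {i}. sqrt (w i j) * m $ j $ i)"

definition graph_lap :: "('n::finite \<Rightarrow> 'n \<Rightarrow> real) \<Rightarrow> real^'n \<Rightarrow> real^'n" where
  "graph_lap w u = (\<chi> i. \<Sum>j\<in>UNIV. w i j * (u $ j - u $ i))"

definition open_cube :: "(real^'n::finite) set" where
  "open_cube = {x. \<forall>i. 0 < x $ i \<and> x $ i < 1}"

definition prob_eps :: "real \<Rightarrow> (real^'n::finite) set" where
  "prob_eps \<epsilon> = {x. (\<Sum>i\<in>UNIV. x $ i) = 1 \<and> (\<forall>i. x $ i > \<epsilon>)}"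

definition C1_on :: "'a::euclidean_space set \<Rightarrow> ('a \<Rightarrow> 'b::real_normed_vector) \<Rightarrow> bool" where
  "C1_on S f \<longleftrightarrow> (\<exists>f'. (\<forall>x\<in>S. (f has_derivative blinfun_apply (f' x)) (at x within S))
                       \<and> continuous_on S f')"

definition vmin :: "real^'n::finite \<Rightarrow> real" where
  "vmin x = Min (range (\<lambda>i. x $ i))"

end

theory Submission
  imports Defs
begin

text \<open>
  Let \<open>i\<close> be an index where \<open>\<rho>(s)\<close> is minimal. The diffusion terms
  \<open>\<omega>\<^sub>i\<^sub>j (\<rho>\<^sub>j - \<rho>\<^sub>i)\<close> are then nonnegative, and each flux term \<open>\<surd>\<omega>\<^sub>i\<^sub>j A\<^sub>j\<^sub>i\<close> is either absorbed
  by its diffusion term (if \<open>\<rho>\<^sub>j \<ge> L \<rho>\<^sub>i\<close>, since \<open>h(\<rho>\<^sub>i/\<rho>\<^sub>j)\<close> is then small by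
  \<open>h(0+) = 0\<close>) or is \<open>O(\<rho>\<^sub>i)\<close> by boundedness of \<open>h\<close> (if \<open>\<rho>\<^sub>j < L \<rho>\<^sub>i\<close>).
  So \<open>\<rho>\<^sub>i' > -C \<rho>\<^sub>i\<close> at every minimal index, and a minimum principle shows that
  \<open>e\<^sup>C\<^sup>t min\<^sub>i \<rho>\<^sub>i(t)\<close> never decreases. With \<open>K = 2\<close>, falling from \<open>\<delta>\<close> to \<open>\<delta>/4\<close>
  therefore takes time at least \<open>ln 4 / C\<close>.
\<close>

lemma vmin_le: "vmin x \<le> x $ i"
  unfolding vmin_def by (rule Min_le) auto

lemma vmin_attained: obtains i where "vmin x = x $ i"
proof -
  have "vmin x \<in> range (\<lambda>i. x $ i)"
    unfolding vmin_def by (rule Min_in) auto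
  then show ?thesis using that by blast
qed

lemma has_real_derivative_vec_nth:
  assumes "(f has_vector_derivative f') F"
  shows "((\<lambda>t. f t $ i) has_real_derivative f' $ i) F"
  using bounded_linear.has_vector_derivative[OF bounded_linear_vec_nth assms]
  by (simp add: has_real_derivative_iff_has_vector_derivative)

lemma finite_family_min_principle:
  fixes f :: "'i::finite \<Rightarrow> real \<Rightarrow> real"
  assumes "a \<le> b"
    and cont: "\<And>j. continuous_on {a..b} (f j)"
    and min_increases: "\<And>i t. t \<in> {a..<b} \<Longrightarrow> \<forall>j. f i t \<le> f j t \<Longrightarrow>
          eventually (\<lambda>u. f i t < f i u) (at_right t)"
    and start: "\<And>j. c \<le> f j a"
  shows "c \<le> f j b"
proof -
  define S where "S = {t \<in> {a..b}. \<forall>j. c \<le> f j t}"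
  have "closed ({a..b} \<inter> f j -` {c..})" for j
    by (rule continuous_closed_preimage[OF cont]) auto
  moreover have "S = (\<Inter>j. {a..b} \<inter> f j -` {c..})" by (auto simp: S_def)
  ultimately have "closed S" by (metis closed_INT)
  moreover have "a \<in> S" "bdd_above S"
    using \<open>a \<le> b\<close> start by (auto simp: S_def bdd_above_def)
  ultimately have s_in: "Sup S \<in> S" by (blast intro: closed_contains_Sup)
  define s where "s = Sup S"
  have "s = b"
  proof (rule ccontr)
    assume "s \<noteq> b"
    with s_in have s: "s \<in> {a..<b}" by (auto simp: S_def s_def)
    have "eventually (\<lambda>u. c \<le> f j u) (at_right s)" for j
    proof (cases "c < f j s")
      case True
      have "continuous_on {s..b} (f j)"
        using s by (intro continuous_on_subset[OF cont]) auto
      then have "(f j \<longlongrightarrow> f j s) (at_right s)"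
        using s by (simp add: continuous_on_Icc_at_rightD)
      from order_tendstoD(1)[OF this True] show ?thesis
        by eventually_elim simp
    next
      case False
      have "\<forall>k. c \<le> f k s" using s_in by (simp add: S_def s_def)
      with False have "f j s = c" "\<forall>k. f j s \<le> f k s"
        by (auto simp: not_less intro: order_trans antisym)
      from min_increases[OF s this(2)] show ?thesis
        by eventually_elim (use \<open>f j s = c\<close> in simp)
    qed
    then have "eventually (\<lambda>u. \<forall>j. c \<le> f j u) (at_right s)"
      by (intro eventually_all_finite) auto
    moreover have "eventually (\<lambda>u. u \<in> {s<..<b}) (at_right s)"
      using s eventually_at_right_real by auto
    ultimately obtain u where "u \<in> {s<..<b}" "\<forall>j. c \<le> f j u"
      using eventually_happens[OF eventually_conj] trivial_limit_at_right_real by blast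
    moreover from this s have "u \<le> s"
      unfolding s_def using \<open>bdd_above S\<close> by (intro cSup_upper) (auto simp: S_def)
    ultimately show False by simp
  qed
  with s_in show ?thesis by (simp add: S_def s_def)
qed

lemma vmin_exp_lower_bound:
  fixes \<rho> :: "real \<Rightarrow> real^'n::finite"
  assumes "a \<le> b"
    and deriv: "\<And>s. s \<in> {a..b} \<Longrightarrow> (\<rho> has_vector_derivative D s) (at s within {a..b})"
    and drift: "\<And>s i. s \<in> {a..<b} \<Longrightarrow> \<forall>k. \<rho> s $ i \<le> \<rho> s $ k \<Longrightarrow> - C * \<rho> s $ i < D s $ i"
  shows "exp (- C * (b - a)) * vmin (\<rho> a) \<le> vmin (\<rho> b)"
proof -
  define f where "f i t = exp (C * t) * \<rho> t $ i" for i t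
  have f_deriv: "(f i has_real_derivative exp (C * s) * (C * \<rho> s $ i + D s $ i)) (at s within {a..b})"
    if "s \<in> {a..b}" for i s
    unfolding f_def
    by (rule derivative_eq_intros has_real_derivative_vec_nth deriv[OF that] | simp add: algebra_simps)+
  have "continuous_on {a..b} (f j)" for j
    using f_deriv by (rule DERIV_continuous_on)
  moreover have "eventually (\<lambda>u. f i t < f i u) (at_right t)"
    if t: "t \<in> {a..<b}" and "\<forall>j. f i t \<le> f j t" for i t
  proof -
    have "\<forall>k. \<rho> t $ i \<le> \<rho> t $ k" using that(2) by (simp add: f_def)
    then have "0 < C * \<rho> t $ i + D t $ i" using drift[OF t] by force
    then have "0 < exp (C * t) * (C * \<rho> t $ i + D t $ i)" by simp
    from has_real_derivative_pos_inc_right[OF f_deriv this] t obtain d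
      where "d > 0" "\<forall>h>0. t + h \<in> {a..b} \<longrightarrow> h < d \<longrightarrow> f i t < f i (t + h)"
      by auto
    then show ?thesis
      unfolding eventually_at_right_field
      by (intro exI[of _ "min (t + d) b"]) (use t in \<open>auto dest: spec[of _ "_ - t"]\<close>)
  qed
  moreover have "exp (C * a) * vmin (\<rho> a) \<le> f j a" for j
    by (simp add: f_def vmin_le)
  ultimately have "exp (C * a) * vmin (\<rho> a) \<le> f j b" for j
    by (rule finite_family_min_principle[OF \<open>a \<le> b\<close>])
  moreover obtain j where "vmin (\<rho> b) = \<rho> b $ j"
    by (rule vmin_attained)
  ultimately have "exp (C * a) * vmin (\<rho> a) \<le> exp (C * b) * vmin (\<rho> b)"
    by (simp add: f_def)
  then have "exp (- (C * b)) * (exp (C * a) * vmin (\<rho> a)) \<le> vmin (\<rho> b)"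
    by (simp add: exp_minus field_simps)
  then show ?thesis
    by (simp add: algebra_simps flip: exp_add)
qed

lemma edge_flux_plus_diffusion_ge:
  fixes h :: "real \<Rightarrow> real"
  assumes "0 \<le> w" "0 < xi" "xi \<le> xj" "2 \<le> L" "0 \<le> M"
    and a_bound: "\<bar>a\<bar> \<le> (xj + xi) * h (xi / xj)"
    and h_bdd: "\<forall>u>0. h u \<le> M"
    and h_small: "\<forall>u. 0 < u \<and> u \<le> 1 / L \<longrightarrow> h u \<le> sqrt w / 4"
  shows "- (sqrt w * (1 + L) * M) * xi \<le> sqrt w * a + w * (xj - xi)"
proof -
  have "0 \<le> sqrt w * (1 + L) * M * xi" using assms(1,2,4,5) by simp
  have "sqrt w * \<bar>a\<bar> \<le> sqrt w * (1 + L) * M * xi + w * (xj - xi)"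
  proof (cases "L * xi \<le> xj")
    case True
    then have "xi / xj \<le> 1 / L" using assms(2-4) by (simp add: field_simps)
    with h_small assms(2,3) have "h (xi / xj) \<le> sqrt w / 4" by simp
    with a_bound assms(2,3) have "\<bar>a\<bar> \<le> (xj + xi) * (sqrt w / 4)"
      by (meson add_nonneg_nonneg less_imp_le mult_left_mono order_trans)
    then have "sqrt w * \<bar>a\<bar> \<le> sqrt w * ((xj + xi) * (sqrt w / 4))"
      by (rule mult_left_mono) (simp add: \<open>0 \<le> w\<close>)
    also have "\<dots> = w * ((xj + xi) / 4)"
      using \<open>0 \<le> w\<close> by (simp add: algebra_simps)
    also have "\<dots> \<le> w * (xj - xi)"
    proof -
      have "2 * xi \<le> xj"
        using True mult_right_mono[OF assms(4) less_imp_le[OF assms(2)]] by linarith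
      then show ?thesis
        using \<open>0 \<le> w\<close> \<open>0 < xi\<close> by (intro mult_left_mono) (simp_all add: field_simps)
    qed
    finally show ?thesis using \<open>0 \<le> sqrt w * (1 + L) * M * xi\<close> by linarith
  next
    case False
    have "\<bar>a\<bar> \<le> (xj + xi) * M"
      using a_bound h_bdd assms(2,3) by (meson add_nonneg_nonneg less_imp_le mult_left_mono
          order_trans divide_pos_pos less_le_trans)
    also have "\<dots> \<le> ((1 + L) * xi) * M"
      using False \<open>0 \<le> M\<close> by (intro mult_right_mono) (simp_all add: algebra_simps)
    finally have "sqrt w * \<bar>a\<bar> \<le> sqrt w * ((1 + L) * xi * M)"
      by (rule mult_left_mono) (simp add: \<open>0 \<le> w\<close>)
    moreover have "0 \<le> w * (xj - xi)" using assms(1,3) by simp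
    ultimately show ?thesis by (simp add: ac_simps)
  qed
  moreover have "- (sqrt w * \<bar>a\<bar>) \<le> sqrt w * a"
    by (metis abs_ge_minus_self abs_mult abs_of_nonneg minus_le_iff real_sqrt_ge_zero \<open>0 \<le> w\<close>)
  ultimately show ?thesis by simp
qed

lemma drift_ge_at_minimum:
  fixes h :: "real \<Rightarrow> real" and x :: "real^'n::finite" and B :: "real^'n^'n"
  assumes "weighted_graph w" "min_max_weights w wmin wmax"
    and x_pos: "\<forall>k. 0 < x $ k" and i_min: "\<forall>k. x $ i \<le> x $ k"
    and B_bound: "\<forall>i j. 0 < w i j \<longrightarrow> \<bar>B $ i $ j\<bar> \<le> (x $ i + x $ j) * h (x $ j / x $ i)"
    and "2 \<le> L" "0 \<le> M" and h_bdd: "\<forall>u>0. h u \<le> M"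
    and h_small: "\<forall>u. 0 < u \<and> u \<le> 1 / L \<longrightarrow> h u \<le> sqrt wmin / 4"
  shows "- (CARD('n) * sqrt wmax * (1 + L) * M) * x $ i \<le> (graph_div w B + graph_lap w x) $ i"
proof -
  have w_sym: "w j k = w k j" and w_nonneg: "0 \<le> w j k" and w_loop: "w j j = 0" for j k
    using assms(1) by (auto simp: weighted_graph_def)
  have w_range: "wmin \<le> w j k \<and> w j k \<le> wmax" if "0 < w j k" for j k
    using assms(2) that by (auto simp: min_max_weights_def)
  have "0 \<le> wmax"
    using assms(2) by (auto simp: min_max_weights_def)
  have edge_term: "- (sqrt wmax * (1 + L) * M) * x $ i
      \<le> sqrt (w i j) * B $ j $ i + w i j * (x $ j - x $ i)" for j
  proof (cases "w i j = 0")
    case True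
    have "0 \<le> sqrt wmax * (1 + L) * M * x $ i"
      using \<open>0 \<le> wmax\<close> \<open>2 \<le> L\<close> \<open>0 \<le> M\<close> x_pos by (simp add: less_imp_le)
    with True show ?thesis by simp
  next
    case False
    with w_nonneg have "0 < w i j" by (simp add: order_less_le)
    have sqrt_range: "sqrt wmin \<le> sqrt (w i j)" "sqrt (w i j) \<le> sqrt wmax"
      using w_range[OF \<open>0 < w i j\<close>] by simp_all
    have "sqrt (w i j) * ((1 + L) * M * x $ i) \<le> sqrt wmax * ((1 + L) * M * x $ i)"
      using sqrt_range(2) \<open>2 \<le> L\<close> \<open>0 \<le> M\<close> x_pos by (intro mult_right_mono) (simp_all add: less_imp_le)
    then have "- (sqrt wmax * (1 + L) * M) * x $ i \<le> - (sqrt (w i j) * (1 + L) * M) * x $ i"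
      by (simp add: ac_simps)
    also have "\<dots> \<le> sqrt (w i j) * B $ j $ i + w i j * (x $ j - x $ i)"
    proof (rule edge_flux_plus_diffusion_ge[OF w_nonneg x_pos[rule_format] i_min[rule_format]
          \<open>2 \<le> L\<close> \<open>0 \<le> M\<close> _ h_bdd])
      show "\<bar>B $ j $ i\<bar> \<le> (x $ j + x $ i) * h (x $ i / x $ j)"
        using B_bound \<open>0 < w i j\<close> w_sym by metis
      show "\<forall>u. 0 < u \<and> u \<le> 1 / L \<longrightarrow> h u \<le> sqrt (w i j) / 4"
        using h_small sqrt_range(1) by (meson divide_right_mono order_trans zero_le_numeral)
    qed
    finally show ?thesis .
  qed
  have "(graph_div w B + graph_lap w x) $ i
      = (\<Sum>j\<in>UNIV. sqrt (w i j) * B $ j $ i + w i j * (x $ j - x $ i))"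
    by (simp add: graph_div_def graph_lap_def sum_diff1 w_loop sum.distrib)
  moreover have "(\<Sum>j::'n\<in>UNIV. - (sqrt wmax * (1 + L) * M) * x $ i)
      \<le> (\<Sum>j\<in>UNIV. sqrt (w i j) * B $ j $ i + w i j * (x $ j - x $ i))"
    by (intro sum_mono edge_term)
  ultimately show ?thesis by (simp add: ac_simps)
qed

lemma tendsto_zero_bounded_on_inverse_interval:
  fixes h :: "real \<Rightarrow> real"
  assumes "(h \<longlongrightarrow> 0) (at_right 0)" "0 < \<eta>"
  obtains L where "2 \<le> L" "\<forall>u. 0 < u \<and> u \<le> 1 / L \<longrightarrow> h u \<le> \<eta>"
proof -
  obtain d where "0 < d" and d: "\<forall>u. 0 < u \<and> u < d \<longrightarrow> h u < \<eta>"
    using order_tendstoD(2)[OF assms] by (auto simp: eventually_at_right_field)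
  define L where "L = max 2 (2 / d)"
  have "2 \<le> L" "2 / d \<le> L" by (simp_all add: L_def)
  then have "1 / L < d" using \<open>0 < d\<close> by (simp add: field_simps)
  with d have "\<forall>u. 0 < u \<and> u \<le> 1 / L \<longrightarrow> h u \<le> \<eta>"
    by (meson less_imp_le order_le_less_trans)
  with \<open>2 \<le> L\<close> show ?thesis by (rule that)
qed

lemma vmin_decay_along_solution:
  fixes h :: "real \<Rightarrow> real" and \<rho> :: "real \<Rightarrow> real^'n::finite"
    and A :: "real \<Rightarrow> real^'n \<Rightarrow> real^'n^'n"
  assumes "weighted_graph w" "min_max_weights w wmin wmax" "a \<le> b"
    and "2 \<le> L" "0 \<le> M" and h_bdd: "\<forall>u>0. h u \<le> M"
    and h_small: "\<forall>u. 0 < u \<and> u \<le> 1 / L \<longrightarrow> h u \<le> sqrt wmin / 4"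
    and in_cube: "\<forall>s\<in>{a..b}. \<rho> s \<in> open_cube"
    and A_bound: "\<forall>s\<in>{a..b}. \<forall>i j. 0 < w i j \<longrightarrow>
          \<bar>A s (\<rho> s) $ i $ j\<bar> \<le> (\<rho> s $ i + \<rho> s $ j) * h (\<rho> s $ j / \<rho> s $ i)"
    and ode: "\<forall>s\<in>{a..b}. (\<rho> has_vector_derivative
          graph_div w (A s (\<rho> s)) + graph_lap w (\<rho> s)) (at s within {a..b})"
  shows "exp (- (CARD('n) * sqrt wmax * (1 + L) * M + 1) * (b - a)) * vmin (\<rho> a) \<le> vmin (\<rho> b)"
proof (rule vmin_exp_lower_bound[OF \<open>a \<le> b\<close>])
  show "(\<rho> has_vector_derivative graph_div w (A s (\<rho> s)) + graph_lap w (\<rho> s)) (at s within {a..b})"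
    if "s \<in> {a..b}" for s
    using ode that by blast
next
  fix s i
  assume "s \<in> {a..<b}" and i_min: "\<forall>k. \<rho> s $ i \<le> \<rho> s $ k"
  then have pos: "\<forall>k. 0 < \<rho> s $ k"
    using in_cube by (auto simp: open_cube_def)
  have "- (CARD('n) * sqrt wmax * (1 + L) * M) * \<rho> s $ i
      \<le> (graph_div w (A s (\<rho> s)) + graph_lap w (\<rho> s)) $ i"
    using A_bound \<open>s \<in> {a..<b}\<close>
    by (intro drift_ge_at_minimum[OF assms(1,2) pos i_min _ assms(4,5) h_bdd h_small]) auto
  moreover have "- (CARD('n) * sqrt wmax * (1 + L) * M + 1) * \<rho> s $ i
      < - (CARD('n) * sqrt wmax * (1 + L) * M) * \<rho> s $ i"
    using pos[rule_format, of i] by (simp add: algebra_simps)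
  ultimately show "- (CARD('n) * sqrt wmax * (1 + L) * M + 1) * \<rho> s $ i
      < (graph_div w (A s (\<rho> s)) + graph_lap w (\<rho> s)) $ i"
    by linarith
qed

theorem lemma2p2:
  fixes h :: "real \<Rightarrow> real" and wmin wmax :: real
  assumes h_pos: "\<forall>u>0. h u > 0"
    and h_bdd: "\<exists>M. \<forall>u>0. h u \<le> M"
    and h_0: "(h \<longlongrightarrow> 0) (at_right 0)"
    and h_inf: "(h \<longlongrightarrow> 0) at_top"
  shows "\<exists>K c0. K > 1 \<and> c0 > 0 \<and>
    (\<forall>(w :: 'n::finite \<Rightarrow> 'n \<Rightarrow> real) (T::real) (A :: real \<Rightarrow> real^'n \<Rightarrow> real^'n^'n)
       (\<epsilon>::real) (\<mu>::real^'n) (\<delta>::real) (t0::real) (t1::real) (\<rho> :: real \<Rightarrow> real^'n).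
      weighted_graph w \<and> min_max_weights w wmin wmax \<and>
      T > 0 \<and>
      C1_on ({0..T} \<times> open_cube) (\<lambda>(s, x). A s x) \<and>
      (\<forall>s\<in>{0..T}. \<forall>x\<in>open_cube. \<forall>i j. A s x $ i $ j = - A s x $ j $ i) \<and>
      (\<forall>s\<in>{0..T}. \<forall>x\<in>open_cube. \<forall>i j. 0 < w i j \<longrightarrow>
          \<bar>A s x $ i $ j\<bar> \<le> (x $ i + x $ j) * h (x $ j / x $ i)) \<and>
      \<epsilon> > 0 \<and> \<mu> \<in> prob_eps \<epsilon> \<and>
      0 < t0 \<and> t0 < t1 \<and> t1 \<le> T \<and>
      C1_on {0..t1} \<rho> \<and> (\<forall>s\<in>{0..t1}. \<rho> s \<in> open_cube) \<and>
      (\<forall>s\<in>{0..t1}. (\<rho> has_vector_derivative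
            (graph_div w (A s (\<rho> s)) + graph_lap w (\<rho> s))) (at s within {0..t1})) \<and>
      \<rho> 0 = \<mu> \<and>
      0 < \<delta> \<and> \<delta> < \<epsilon> / K \<and>
      vmin (\<rho> t0) = \<delta> \<and> (\<forall>t\<in>{0..<t0}. vmin (\<rho> t) \<noteq> \<delta>) \<and>
      vmin (\<rho> t1) = \<delta> / (2 * K) \<and> (\<forall>t\<in>{0..<t1}. vmin (\<rho> t) \<noteq> \<delta> / (2 * K))
      \<longrightarrow> t1 - t0 \<ge> c0)"
proof (cases "0 < wmin \<and> 0 < wmax")
  case False
  show ?thesis
    by (rule exI[of _ 2], rule exI[of _ 1]) (use False in \<open>auto simp: min_max_weights_def\<close>)
next
  case True
  then have "0 < wmin" "0 < wmax" by simp_all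
  obtain M where h_le_M: "\<forall>u>0. h u \<le> M" using h_bdd by blast
  then have "0 \<le> M" using h_pos by (meson less_imp_le order_less_le_trans zero_less_one)
  have "0 < sqrt wmin / 4" using \<open>0 < wmin\<close> by simp
  then obtain L where "2 \<le> L" and h_small: "\<forall>u. 0 < u \<and> u \<le> 1 / L \<longrightarrow> h u \<le> sqrt wmin / 4"
    by (rule tendsto_zero_bounded_on_inverse_interval[OF h_0])
  define C where "C = CARD('n) * sqrt wmax * (1 + L) * M + 1"
  have "0 < C"
    unfolding C_def using \<open>0 < wmax\<close> \<open>2 \<le> L\<close> \<open>0 \<le> M\<close>
    by (intro add_nonneg_pos mult_nonneg_nonneg) simp_all
  show ?thesis
  proof (rule exI[of _ 2], rule exI[of _ "ln 4 / C"], intro conjI allI impI; (elim conjE)?)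
    fix w T A \<epsilon> \<mu> \<delta> t0 t1 and \<rho> :: "real \<Rightarrow> real^'n"
    assume "weighted_graph w" "min_max_weights w wmin wmax" "0 < t0" "t0 < t1" "t1 \<le> T"
      and in_cube: "\<forall>s\<in>{0..t1}. \<rho> s \<in> open_cube"
      and A_bound: "\<forall>s\<in>{0..T}. \<forall>x\<in>open_cube. \<forall>i j. 0 < w i j \<longrightarrow>
          \<bar>A s x $ i $ j\<bar> \<le> (x $ i + x $ j) * h (x $ j / x $ i)"
      and ode: "\<forall>s\<in>{0..t1}. (\<rho> has_vector_derivative
          graph_div w (A s (\<rho> s)) + graph_lap w (\<rho> s)) (at s within {0..t1})"
      and "0 < \<delta>" "vmin (\<rho> t0) = \<delta>" "vmin (\<rho> t1) = \<delta> / (2 * 2)"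
    have "exp (- C * (t1 - t0)) * vmin (\<rho> t0) \<le> vmin (\<rho> t1)"
      unfolding C_def
    proof (rule vmin_decay_along_solution[OF \<open>weighted_graph w\<close> \<open>min_max_weights w wmin wmax\<close>
          _ \<open>2 \<le> L\<close> \<open>0 \<le> M\<close> h_le_M h_small])
      show "\<forall>s\<in>{t0..t1}. (\<rho> has_vector_derivative
          graph_div w (A s (\<rho> s)) + graph_lap w (\<rho> s)) (at s within {t0..t1})"
        using ode \<open>0 < t0\<close> by (auto intro: has_vector_derivative_within_subset[where S = "{0..t1}"])
    qed (use \<open>0 < t0\<close> \<open>t0 < t1\<close> \<open>t1 \<le> T\<close> in_cube A_bound in auto)
    with \<open>0 < \<delta>\<close> have "exp (- C * (t1 - t0)) \<le> exp (- ln 4)"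
      unfolding \<open>vmin (\<rho> t0) = \<delta>\<close> \<open>vmin (\<rho> t1) = \<delta> / (2 * 2)\<close>
      by (simp add: exp_minus)
    then show "ln 4 / C \<le> t1 - t0"
      using \<open>0 < C\<close> by (simp add: field_simps)
  qed (use \<open>0 < C\<close> in simp_all)
qed

end
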